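(* Let $\mathcal H=\{h_1,\dots,h_k\}$ be an admissible set of $k\ge 2$ distinct integers with $0\in\mathcal H$, let $0\le \ell_1,\ell_2\le k$, and let $p<R$ be prime. Then \[ U_1(p)=-\sum_{\substack{(r,A)=1\\(r,p)=1}}\frac{z^*_{r,p,\ell_1}y^*_{r,\ell_2}}{f_1^*(r)}-\frac{\nu_p^*}{p-1}\sum_{\substack{(r,A)=1\\(r,p)=1}}\frac{z^*_{r,p,\ell_1}z^*_{r,p,\ell_2}}{f_1^*(r)}, \] and \[ U_3(p)=\sum_{\substack{(r,A)=1\\(r,p)=1}}\frac{z^*_{r,p,\ell_1}z^*_{r,p,\ell_2}}{f_1^*(r)}. \]
   Context: $P(n;\mathcal H)=\prod_{h\in\mathcal H}(n+h)$. For squarefree $d$: - $\nu_d$ is the number of residues $a$ mod $d$ with $P(a;\mathcal H)\equiv0\pmod d$; - $\nu^*_d$ is the number of such $a$ that additionally satisfy $(a,d)=1$ (so $\nu^*_d=\prod_{p\mid d}(\nu_p-1)$). The set $\mathcal H$ is admissible if $\nu_p<p$ for all $p$. Let $\mathfrak S(\mathcal H)=\prod_p(1-\nu_p/p)(1-1/p)^{-k}$. For squarefree $d$, let $f(d)=d/\nu_d$ and $f_1(d)=\prod_{p\mid d}(p-\nu_p)/\nu_p$. For $R>1$, \[ \lambda_{d,\ell}=\mu(d)\frac{f(d)}{f_1(d)}\frac{\mathfrak S(\mathcal H)}{\ell!}\sum_{r<R/d,(r,d)=1}\frac{\mu^2(r)}{f_1(r)}(\log\tfrac R{rd})^\ell\quad\text{for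 } d<R, \] and $\lambda_{d,\ell}=0$ for $d\ge R$. Let $A$ be the product of the primes $p$ with $\nu^*_p=0$. For squarefree $r$ with $(r,A)=1$, let $f^*(r)=\phi(r)/\nu^*_r$ and $f_1^*(r)=\prod_{p\mid r}\frac{p-\nu_p}{\nu_p-1}$. Define \[ y^*_{r,\ell}=\mu(r)f_1^*(r)\sum_{(d,A)=1}\frac{\lambda_{dr,\ell}}{f^*(dr)}\quad\text{if } (r,A)=1,\ r<R, \] and $0$ otherwise. Define \[ z^*_{r,p,\ell}=\mu(pr)f_1^*(r)\sum_{(d,A)=1}\frac{\lambda_{drp,\ell}}{f^*(dr)}\quad\text{if } r<R/p,\ (r,A)=1, \] and $0$ otherwise. Finally, \[ U_1(p)=\sum_{d,e:\ p\mid d,\ p\nmid e}\frac{\lambda_{d,\ell_1}\lambda_{e,\ell_2}\nu^*_{[d,e]/p}}{\phi([d,e]/p)},\qquad U_3(p)=\sum_{d,e:\ p\mid d,\ p\mid e}\frac{\lambda_{d,\ell_1}\lambda_{e,\ell_2}\nu^*_{[d,e]/p}}{\phi([d,e]/p)}. \] *)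

theory Defs
  imports "HOL-Analysis.Analysis" "HOL-Number_Theory.Number_Theory" "HOL-Computational_Algebra.Squarefree"
begin

definition Ppoly :: "int set \<Rightarrow> int \<Rightarrow> int" where
  "Ppoly H n = (\<Prod>h\<in>H. n + h)"

definition nu :: "int set \<Rightarrow> nat \<Rightarrow> nat" where
  "nu H d = card {a \<in> {0..<d}. int d dvd Ppoly H (int a)}"

definition nustar :: "int set \<Rightarrow> nat \<Rightarrow> nat" where
  "nustar H d = card {a \<in> {0..<d}. int d dvd Ppoly H (int a) \<and> coprime a d}"

definition admissible :: "int set \<Rightarrow> bool" where
  "admissible H \<longleftrightarrow> (\<forall>p::nat. prime p \<longrightarrow> nu H p < p)"

definition mu :: "nat \<Rightarrow> real" where
  "mu n = (if n > 0 \<and> squarefree n then (-1) ^ card (prime_factors n) else 0)"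

definition singseries :: "int set \<Rightarrow> real" where
  "singseries H = (\<Prod>n. if prime n
      then (1 - real (nu H n) / real n) / (1 - 1 / real n) ^ card H else 1)"

definition f :: "int set \<Rightarrow> nat \<Rightarrow> real" where
  "f H d = real d / real (nu H d)"

definition f1 :: "int set \<Rightarrow> nat \<Rightarrow> real" where
  "f1 H d = (\<Prod>p\<in>prime_factors d. (real p - real (nu H p)) / real (nu H p))"

definition lam :: "int set \<Rightarrow> real \<Rightarrow> nat \<Rightarrow> nat \<Rightarrow> real" where
  "lam H R l d = (if 0 < d \<and> real d < R then
      mu d * f H d / f1 H d * singseries H / fact l *
      (\<Sum>r\<in>{r. 0 < r \<and> real r < R / real d \<and> coprime r d}.
          (mu r)^2 / f1 H r * (ln (R / (real r * real d))) ^ l)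
    else 0)"

definition Aprod :: "int set \<Rightarrow> nat" where
  "Aprod H = (\<Prod>{p. prime p \<and> nustar H p = 0})"

definition fstar :: "int set \<Rightarrow> nat \<Rightarrow> real" where
  "fstar H r = real (totient r) / real (nustar H r)"

definition f1star :: "int set \<Rightarrow> nat \<Rightarrow> real" where
  "f1star H r = (\<Prod>p\<in>prime_factors r. (real p - real (nu H p)) / (real (nu H p) - 1))"

text \<open>y*_{r,l}; the sum over d with (d,A)=1 is restricted to d r < R,
  outside of which lam vanishes.\<close>
definition ystar :: "int set \<Rightarrow> real \<Rightarrow> nat \<Rightarrow> nat \<Rightarrow> real" where
  "ystar H R l r = (if coprime r (Aprod H) \<and> real r < R then
      mu r * f1star H r *
      (\<Sum>d\<in>{d. 0 < d \<and> coprime d (Aprod H) \<and> real (d * r) < R}.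
          lam H R l (d * r) / fstar H (d * r))
    else 0)"

definition zstar :: "int set \<Rightarrow> real \<Rightarrow> nat \<Rightarrow> nat \<Rightarrow> nat \<Rightarrow> real" where
  "zstar H R l r p = (if real r < R / real p \<and> coprime r (Aprod H) then
      mu (p * r) * f1star H r *
      (\<Sum>d\<in>{d. 0 < d \<and> coprime d (Aprod H) \<and> real (d * r * p) < R}.
          lam H R l (d * r * p) / fstar H (d * r))
    else 0)"

text \<open>U_1 and U_3; d, e range over positive integers below R (lam vanishes otherwise).\<close>
definition U1 :: "int set \<Rightarrow> real \<Rightarrow> nat \<Rightarrow> nat \<Rightarrow> nat \<Rightarrow> real" where
  "U1 H R l1 l2 p = (\<Sum>(d, e)\<in>{(d, e). 0 < d \<and> 0 < e \<and> real d < R \<and> real e < R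
        \<and> p dvd d \<and> \<not> p dvd e}.
      lam H R l1 d * lam H R l2 e * real (nustar H (lcm d e div p))
        / real (totient (lcm d e div p)))"

definition U3 :: "int set \<Rightarrow> real \<Rightarrow> nat \<Rightarrow> nat \<Rightarrow> nat \<Rightarrow> real" where
  "U3 H R l1 l2 p = (\<Sum>(d, e)\<in>{(d, e). 0 < d \<and> 0 < e \<and> real d < R \<and> real e < R
        \<and> p dvd d \<and> p dvd e}.
      lam H R l1 d * lam H R l2 e * real (nustar H (lcm d e div p))
        / real (totient (lcm d e div p)))"

end

theory Submission
  imports Defs
begin

(* Write g*(n) = nu*_n / phi(n), i.e. g* = 1/f*. It is multiplicative, vanishes on multiples of
   the primes dividing A, and 1/g*(q) = 1 + f1*(q) at every other prime q. Hence, for squarefree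
   a and b,
     g*([a,b]) = g*(a) g*(b) * sum over r | (a,b) with (r,A) = 1 of f1*(r).
   In U1 and U3 write d = p a; then [d,e]/p is [a,e] resp. [a,e/p]. Inserting the identity and
   summing over r first, each term factors into the inner sums
     sum over rp | d of lambda_d g*(d/p)           = z*_{r,p} / (mu(pr) f1*(r)),
     sum over r | e, p not dividing e of lambda_e g*(e)
        = y*_r / (mu(r) f1*(r)) - g*(p) * (sum over rp | e of lambda_e g*(e/p)),
   and g*(p) = nu*_p / (p - 1). *)

lemma finite_nat_less_real: "finite {n::nat. real n < R}"
proof -
  have "{n::nat. real n < R} = {..<nat \<lceil>R\<rceil>}"
    by (auto simp: zless_nat_eq_int_zless less_ceiling_iff)
  then show ?thesis by simp
qed

lemma card_chinese_remainder:
  fixes m n :: nat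
  assumes "coprime m n" "0 < m" "0 < n"
  shows "card {x. x < m * n \<and> P (x mod m) \<and> Q (x mod n)}
           = card {a. a < m \<and> P a} * card {b. b < n \<and> Q b}"
proof -
  let ?f = "\<lambda>x. (x mod m, x mod n)"
  have "bij_betw ?f {x. x < m * n \<and> P (x mod m) \<and> Q (x mod n)}
          ({a. a < m \<and> P a} \<times> {b. b < n \<and> Q b})"
    unfolding bij_betw_def
  proof
    show "inj_on ?f {x. x < m * n \<and> P (x mod m) \<and> Q (x mod n)}"
    proof (intro inj_onI, clarify)
      fix x y assume xy: "x < m * n" "y < m * n" "x mod m = y mod m" "x mod n = y mod n"
      have "\<exists>!z. z < m * n \<and> [z = x] (mod m) \<and> [z = x] (mod n)"
        using binary_chinese_remainder_unique_nat[OF assms(1)] assms by simp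
      moreover have "x < m * n \<and> [x = x] (mod m) \<and> [x = x] (mod n)"
        "y < m * n \<and> [y = x] (mod m) \<and> [y = x] (mod n)"
        using xy by (simp_all add: cong_def)
      ultimately show "x = y" by blast
    qed
    show "?f ` {x. x < m * n \<and> P (x mod m) \<and> Q (x mod n)}
            = {a. a < m \<and> P a} \<times> {b. b < n \<and> Q b}"
    proof safe
      fix a b assume ab: "a < m" "P a" "b < n" "Q b"
      obtain x where x: "x < m * n" "[x = a] (mod m)" "[x = b] (mod n)"
        using binary_chinese_remainder_unique_nat[OF assms(1), of a b] assms by auto
      with ab have "x mod m = a" "x mod n = b" by (simp_all add: cong_def)
      with ab x(1) show "(a, b) \<in> ?f ` {x. x < m * n \<and> P (x mod m) \<and> Q (x mod n)}"
        by (intro image_eqI[of _ _ x]) auto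
    qed (use assms in auto)
  qed
  then show ?thesis
    by (simp add: bij_betw_same_card card_cartesian_product)
qed

lemma coprime_less_prime: "prime (q::nat) \<Longrightarrow> 0 < a \<Longrightarrow> a < q \<Longrightarrow> coprime a q"
  by (metis coprime_commute dvd_imp_le not_le prime_imp_coprime)

lemma prime_factor_not_dvd_if_coprime: "q \<in> prime_factors r \<Longrightarrow> coprime r a \<Longrightarrow> \<not> q dvd (a::nat)"
  by (meson coprime_common_divisor in_prime_factors_iff not_prime_unit)

lemma squarefree_imp_pos: "squarefree (n::nat) \<Longrightarrow> 0 < n"
  by (metis gr0I not_squarefree_0)

lemma coprime_div_prime_if_squarefree:
  fixes n p :: nat
  assumes "squarefree n" "prime p" "p dvd n"
  shows "coprime (n div p) p"
proof -
  obtain k where n: "n = p * k" using assms(3) by (rule dvdE)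
  have "\<not> p dvd k"
  proof
    assume "p dvd k"
    then have "p\<^sup>2 dvd n" by (simp add: n power2_eq_square mult_dvd_mono)
    then show False using assms(1,2) squarefreeD not_prime_unit by blast
  qed
  then have "coprime k p"
    using prime_imp_coprime[OF assms(2)] coprime_commute by blast
  then show ?thesis
    using n prime_gt_0_nat[OF assms(2)] by simp
qed

lemma squarefree_lcm:
  assumes "squarefree (a::nat)" "squarefree b"
  shows "squarefree (lcm a b)"
proof -
  have "a \<noteq> 0" "b \<noteq> 0" using assms by (metis not_squarefree_0)+
  then show ?thesis
    using assms by (simp add: squarefree_factorial_semiring'' multiplicity_lcm)
qed

lemma lcm_mult_coprime_left: "coprime (p::nat) e \<Longrightarrow> lcm (p * a) e = p * lcm a e"
  by (simp add: coprime_commute div_mult_swap gcd_mult_left_left_cancel lcm_nat_def mult.assoc)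

lemma lcm_div_prime_left:
  fixes p d e :: nat
  assumes "prime p" "p dvd d" "\<not> p dvd e"
  shows "lcm d e div p = lcm (d div p) e"
proof -
  have "lcm d e = p * lcm (d div p) e"
    using assms lcm_mult_coprime_left[of p e "d div p"] by (simp add: prime_imp_coprime)
  then show ?thesis using prime_gt_0_nat[OF assms(1)] by simp
qed

lemma lcm_div_prime_both:
  fixes p d e :: nat
  assumes "prime p" "p dvd d" "p dvd e"
  shows "lcm d e div p = lcm (d div p) (e div p)"
proof -
  have "lcm d e = p * lcm (d div p) (e div p)"
    using assms lcm_mult_left[of p "d div p" "e div p"] by simp
  then show ?thesis using prime_gt_0_nat[OF assms(1)] by simp
qed

lemma prime_factors_Prod_primes:
  "finite S \<Longrightarrow> (\<And>q. q \<in> S \<Longrightarrow> prime q) \<Longrightarrow> prime_factors (\<Prod>S :: nat) = S"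
proof -
  assume S: "finite S" "\<And>q. q \<in> S \<Longrightarrow> prime q"
  then have "0 \<notin> S" using not_prime_0 by blast
  then have "prime_factors (\<Prod>S) = (\<Union>q\<in>S. prime_factors q)"
    using prime_factors_prod[OF S(1), of "\<lambda>q. q"] by simp
  then show ?thesis using S(2) by (simp add: prime_prime_factors)
qed

lemma Prod_prime_factors_squarefree: "squarefree (n::nat) \<Longrightarrow> \<Prod>(prime_factors n) = n"
  using prime_factorization_nat[of n]
  by (metis (no_types, lifting) not_squarefree_0 prod.cong squarefree_factorial_semiring'
      gr0I power_one_right)

lemma sum_divisors_squarefree:
  fixes c :: "nat \<Rightarrow> 'a::comm_semiring_1"
  assumes "squarefree n"
  shows "(\<Sum>r | r dvd n. \<Prod>q\<in>prime_factors r. c q) = (\<Prod>q\<in>prime_factors n. 1 + c q)"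
proof -
  have "(\<Prod>q\<in>prime_factors n. 1 + c q) = (\<Sum>S\<in>Pow (prime_factors n). \<Prod>q\<in>S. c q)"
    using prod_add[of "prime_factors n" c "\<lambda>_. 1"] by (simp add: add.commute)
  also have "\<dots> = (\<Sum>r | r dvd n. \<Prod>q\<in>prime_factors r. c q)"
  proof (rule sum.reindex_bij_witness[where j = "\<lambda>S. \<Prod>S" and i = prime_factors])
    fix S assume "S \<in> Pow (prime_factors n)"
    then have S: "finite S" "\<And>q. q \<in> S \<Longrightarrow> prime q" "S \<subseteq> prime_factors n"
      by (auto intro: finite_subset)
    show "prime_factors (\<Prod>S) = S" by (rule prime_factors_Prod_primes[OF S(1,2)])
    then show "(\<Prod>q\<in>prime_factors (\<Prod>S). c q) = (\<Prod>q\<in>S. c q)" by simp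
    have "\<Prod>S dvd \<Prod>(prime_factors n)" by (rule prod_dvd_prod_subset[OF _ S(3)]) simp
    then show "\<Prod>S \<in> {r. r dvd n}" using Prod_prime_factors_squarefree[OF assms] by simp
  next
    fix r assume "r \<in> {r. r dvd n}"
    then have r: "r dvd n" by simp
    then show "\<Prod>(prime_factors r) = r"
      using Prod_prime_factors_squarefree squarefree_mono assms by blast
    show "prime_factors r \<in> Pow (prime_factors n)"
      using r assms dvd_prime_factors[of n r] by (metis PowI not_squarefree_0)
  qed
  finally show ?thesis ..
qed

lemma sum_product_restrict_swap:
  fixes c u w :: "_ \<Rightarrow> 'a::comm_semiring_0"
  assumes "finite X" "finite Y" "finite B"
  shows "(\<Sum>(x, y)\<in>X \<times> Y. \<Sum>r\<in>{r\<in>B. P r x \<and> Q r y}. c r * u x * w y)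
           = (\<Sum>r\<in>B. c r * (\<Sum>x\<in>{x\<in>X. P r x}. u x) * (\<Sum>y\<in>{y\<in>Y. Q r y}. w y))"
proof -
  have "(\<Sum>(x, y)\<in>X \<times> Y. \<Sum>r\<in>{r\<in>B. P r x \<and> Q r y}. c r * u x * w y)
          = (\<Sum>r\<in>B. \<Sum>z\<in>{z\<in>X \<times> Y. P r (fst z) \<and> Q r (snd z)}. c r * u (fst z) * w (snd z))"
    using sum.swap_restrict[of "X \<times> Y" B "\<lambda>z r. c r * u (fst z) * w (snd z)"
        "\<lambda>z r. P r (fst z) \<and> Q r (snd z)"] assms
    by (simp add: case_prod_beta')
  also have "\<dots> = (\<Sum>r\<in>B. c r * (\<Sum>x\<in>{x\<in>X. P r x}. u x) * (\<Sum>y\<in>{y\<in>Y. Q r y}. w y))"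
  proof (rule sum.cong[OF refl])
    fix r
    let ?X = "{x\<in>X. P r x}" and ?Y = "{y\<in>Y. Q r y}"
    have "{z\<in>X \<times> Y. P r (fst z) \<and> Q r (snd z)} = ?X \<times> ?Y" by auto
    moreover have "c r * (\<Sum>x\<in>?X. u x) * (\<Sum>y\<in>?Y. w y) = c r * (\<Sum>(x, y)\<in>?X \<times> ?Y. u x * w y)"
      by (simp add: sum_product sum.cartesian_product mult.assoc)
    ultimately show "(\<Sum>z\<in>{z\<in>X \<times> Y. P r (fst z) \<and> Q r (snd z)}. c r * u (fst z) * w (snd z))
                 = c r * (\<Sum>x\<in>?X. u x) * (\<Sum>y\<in>?Y. w y)"
      by (simp add: sum_distrib_left case_prod_beta' mult.assoc)
  qed
  finally show ?thesis .
qed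

definition multiples_below :: "real \<Rightarrow> nat \<Rightarrow> nat set" where
  "multiples_below R m = {n. 0 < n \<and> real n < R \<and> m dvd n}"

lemma finite_multiples_below: "finite (multiples_below R m)"
  by (rule finite_subset[OF _ finite_nat_less_real]) (auto simp: multiples_below_def)

lemma multiples_below_div_dvd:
  "0 < p \<Longrightarrow> {d \<in> multiples_below R p. r dvd d div p} = multiples_below R (r * p)"
  by (auto simp: multiples_below_def dvd_div_iff_mult intro: dvd_mult_left)

lemma sum_multiples_below_reindex:
  fixes \<psi> :: "nat \<Rightarrow> 'a::comm_monoid_add"
  assumes "0 < m" "\<And>d. 0 < d \<Longrightarrow> \<not> P d \<Longrightarrow> \<psi> (d * m) = 0"
  shows "(\<Sum>d | 0 < d \<and> P d \<and> real (d * m) < R. \<psi> (d * m)) = (\<Sum>n\<in>multiples_below R m. \<psi> n)"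
proof -
  have "real d < R" if "real (d * m) < R" for d
  proof -
    have "real d \<le> real (d * m)" using assms(1) by (intro of_nat_mono) simp
    with that show ?thesis by linarith
  qed
  then have "{d. 0 < d \<and> real (d * m) < R} \<subseteq> {d. real d < R}" by blast
  then have "finite {d. 0 < d \<and> real (d * m) < R}"
    by (rule finite_subset) (rule finite_nat_less_real)
  then have "(\<Sum>d | 0 < d \<and> P d \<and> real (d * m) < R. \<psi> (d * m))
               = (\<Sum>d | 0 < d \<and> real (d * m) < R. \<psi> (d * m))"
    by (rule sum.mono_neutral_left) (auto intro: assms(2))
  also have "\<dots> = (\<Sum>n\<in>multiples_below R m. \<psi> n)"
    using assms(1)
    by (intro sum.reindex_bij_witness[where i = "\<lambda>n. n div m" and j = "\<lambda>d. d * m"])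
      (auto simp: multiples_below_def mult.commute elim!: dvdE)
  finally show ?thesis .
qed

section \<open>Roots of P modulo d\<close>

lemma Ppoly_cong: "[a = b] (mod m) \<Longrightarrow> [Ppoly H a = Ppoly H b] (mod m)"
  unfolding Ppoly_def by (intro cong_prod cong_add cong_refl)

definition nustar_root :: "int set \<Rightarrow> nat \<Rightarrow> nat \<Rightarrow> bool" where
  "nustar_root H d a \<longleftrightarrow> int d dvd Ppoly H (int a) \<and> coprime a d"

lemma nustar_eq_card_roots: "nustar H d = card {a. a < d \<and> nustar_root H d a}"
  by (simp add: nustar_def nustar_root_def)

lemma nustar_root_mod_iff:
  assumes "0 < m"
  shows "nustar_root H m (x mod m) \<longleftrightarrow> nustar_root H m x"
proof -
  have "[Ppoly H (int (x mod m)) = Ppoly H (int x)] (mod int m)"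
    by (rule Ppoly_cong) (simp add: cong_def zmod_int)
  then show ?thesis
    using assms by (simp add: nustar_root_def cong_dvd_iff coprime_mod_left_iff)
qed

lemma nustar_root_dvd: "m dvd n \<Longrightarrow> nustar_root H n x \<Longrightarrow> nustar_root H m x"
  unfolding nustar_root_def by (meson coprime_divisors dvd_refl dvd_trans int_dvd_int_iff)

lemma nustar_root_mult_iff:
  assumes "coprime m n"
  shows "nustar_root H (m * n) x \<longleftrightarrow> nustar_root H m x \<and> nustar_root H n x"
proof -
  have "coprime (int m) (int n)" using assms by simp
  then have "int (m * n) dvd z \<longleftrightarrow> int m dvd z \<and> int n dvd z" for z
    by (metis divides_mult dvd_mult_left dvd_mult_right of_nat_mult)
  then show ?thesis by (simp add: nustar_root_def conj_ac)
qed

lemma nustar_mult: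
  assumes "coprime m n" "0 < m" "0 < n"
  shows "nustar H (m * n) = nustar H m * nustar H n"
proof -
  have "{x. x < m * n \<and> nustar_root H (m * n) x}
          = {x. x < m * n \<and> nustar_root H m (x mod m) \<and> nustar_root H n (x mod n)}"
    using assms by (simp add: nustar_root_mult_iff nustar_root_mod_iff)
  then show ?thesis
    by (simp add: nustar_eq_card_roots card_chinese_remainder[OF assms])
qed

lemma nustar_eq_0_if_dvd:
  assumes "m dvd n" "0 < n" "nustar H m = 0"
  shows "nustar H n = 0"
proof -
  have "0 < m" using assms(1,2) by (auto intro: Nat.gr0I)
  then have "\<not> nustar_root H m x" if "x < m" for x
    using assms(3) that by (simp add: nustar_eq_card_roots)
  then have "\<not> nustar_root H n x" for x
    using \<open>0 < m\<close> nustar_root_dvd[OF assms(1)] nustar_root_mod_iff by (meson mod_less_divisor)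
  then show ?thesis by (simp add: nustar_eq_card_roots)
qed

lemma Ppoly_minus_eq_0: "finite H \<Longrightarrow> h \<in> H \<Longrightarrow> Ppoly H (- h) = 0"
  unfolding Ppoly_def by (rule prod_zero) auto

lemma nustar_plus_1_prime:
  assumes "finite H" "0 \<in> H" "prime q"
  shows "nustar H q + 1 = nu H q"
proof -
  have "{a \<in> {0..<q}. int q dvd Ppoly H (int a)} = insert 0 {a. a < q \<and> nustar_root H q a}"
    using prime_gt_0_nat[OF assms(3)] Ppoly_minus_eq_0[OF assms(1,2)]
      coprime_less_prime[OF assms(3)]
    by (auto simp: nustar_root_def)
  then show ?thesis
    using prime_gt_1_nat[OF assms(3)] by (simp add: nu_def nustar_eq_card_roots nustar_root_def)
qed

lemma prime_dvd_if_nustar_eq_0: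
  assumes "finite H" "h \<in> H" "prime q" "nustar H q = 0"
  shows "int q dvd h"
proof -
  have q: "0 < q" using assms(3) prime_gt_0_nat by blast
  (* (-h) mod q is a root of P modulo q; as nu*_q = 0, it cannot be a nonzero residue. *)
  define a where "a = nat ((- h) mod int q)"
  have a: "int a = (- h) mod int q" "a < q"
    using q by (simp_all add: a_def nat_less_iff)
  have "[Ppoly H (int a) = Ppoly H (- h)] (mod int q)"
    by (rule Ppoly_cong) (simp add: a cong_def)
  then have "int q dvd Ppoly H (int a)"
    using Ppoly_minus_eq_0[OF assms(1,2)] by (simp add: cong_dvd_iff)
  moreover have "\<not> nustar_root H q a"
    using assms(4) a(2) by (simp add: nustar_eq_card_roots)
  ultimately have "a = 0"
    using coprime_less_prime[OF assms(3) _ a(2)] by (auto simp: nustar_root_def)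
  then show ?thesis
    using a(1) by (simp add: mod_eq_0_iff_dvd)
qed

section \<open>The reciprocal of f*\<close>

definition gstar :: "int set \<Rightarrow> nat \<Rightarrow> real" where
  "gstar H n = real (nustar H n) / real (totient n)"

lemma divide_fstar_eq: "x / fstar H n = x * gstar H n"
  by (simp add: fstar_def gstar_def)

lemma gstar_mult: "coprime m n \<Longrightarrow> 0 < m \<Longrightarrow> 0 < n \<Longrightarrow> gstar H (m * n) = gstar H m * gstar H n"
  by (simp add: gstar_def nustar_mult totient_mult_coprime)

lemma gstar_prime: "prime q \<Longrightarrow> gstar H q = real (nustar H q) / (real q - 1)"
  using prime_gt_0_nat[of q] by (simp add: gstar_def totient_prime of_nat_diff)

lemma gstar_div_prime:
  assumes "squarefree n" "prime p" "p dvd n"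
  shows "gstar H n = gstar H (n div p) * gstar H p"
proof -
  have n: "n = n div p * p" using assms(3) by simp
  then have "0 < n div p" using squarefree_imp_pos[OF assms(1)] by (metis gr0I mult_0)
  then have "gstar H (n div p * p) = gstar H (n div p) * gstar H p"
    using gstar_mult coprime_div_prime_if_squarefree[OF assms] prime_gt_0_nat[OF assms(2)] by blast
  with n show ?thesis by simp
qed

lemma gstar_Prod_primes:
  "finite S \<Longrightarrow> (\<And>q. q \<in> S \<Longrightarrow> prime q) \<Longrightarrow> gstar H (\<Prod>S) = (\<Prod>q\<in>S. gstar H q)"
proof (induction S rule: finite_induct)
  case empty
  then show ?case by (simp add: gstar_def nustar_def)
next
  case (insert q S)
  then have "coprime q (\<Prod>S)"
    by (intro prod_coprime_right) (auto intro: primes_coprime)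
  with insert show ?case
    by (simp add: gstar_mult prime_gt_0_nat prod_pos)
qed

lemma gstar_squarefree: "squarefree n \<Longrightarrow> gstar H n = (\<Prod>q\<in>prime_factors n. gstar H q)"
  by (metis Prod_prime_factors_squarefree gstar_Prod_primes finite_set_mset
      in_prime_factors_imp_prime)

lemma f1star_prime:
  "prime q \<Longrightarrow> f1star H q = (real q - real (nu H q)) / (real (nu H q) - 1)"
  by (simp add: f1star_def prime_prime_factors)

lemma f1star_eq_prod: "f1star H r = (\<Prod>q\<in>prime_factors r. f1star H q)"
  unfolding f1star_def
  by (intro prod.cong refl) (simp add: prime_prime_factors in_prime_factors_iff)

lemma lam_eq_0_if_not_squarefree: "\<not> squarefree d \<Longrightarrow> lam H R l d = 0"
  by (simp add: lam_def mu_def)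

lemma mu_squared: "squarefree r \<Longrightarrow> (mu r)\<^sup>2 = 1"
  by (simp add: mu_def squarefree_imp_pos flip: power_mult)

lemma mu_prime_mult:
  assumes "prime p" "coprime r p"
  shows "mu (p * r) = - mu r"
proof (cases "squarefree r")
  case True
  then have "r \<noteq> 0" by (metis not_squarefree_0)
  have "squarefree (p * r)"
    using assms True by (simp add: squarefree_mult_coprime squarefree_prime coprime_commute)
  moreover have "p \<notin> prime_factors r"
    using prime_factor_not_dvd_if_coprime[of p r p] assms(2) by (meson dvd_refl)
  moreover have "prime_factors (p * r) = insert p (prime_factors r)"
    using assms(1) \<open>r \<noteq> 0\<close> by (simp add: prime_factors_product prime_prime_factors)
  ultimately show ?thesis
    using True assms(1) by (simp add: mu_def prime_gt_0_nat)
next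
  case False
  then have "\<not> squarefree (p * r)" using squarefree_multD(2) by blast
  with False show ?thesis by (simp add: mu_def)
qed

section \<open>The inner sums\<close>

definition ysum :: "int set \<Rightarrow> real \<Rightarrow> nat \<Rightarrow> nat \<Rightarrow> real" where
  "ysum H R l r = (\<Sum>n\<in>multiples_below R r. lam H R l n * gstar H n)"

definition zsum :: "int set \<Rightarrow> real \<Rightarrow> nat \<Rightarrow> nat \<Rightarrow> nat \<Rightarrow> real" where
  "zsum H R l r p = (\<Sum>n\<in>multiples_below R (r * p). lam H R l n * gstar H (n div p))"

lemma zsum_eq_0_if_not_squarefree:
  assumes "\<not> squarefree r"
  shows "zsum H R l r p = 0"
proof -
  have "\<not> squarefree n" if "r * p dvd n" for n
    using assms that squarefree_mono dvd_mult_left by blast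
  then show ?thesis
    by (simp add: zsum_def multiples_below_def lam_eq_0_if_not_squarefree)
qed

lemma sum_multiples_below_not_dvd:
  assumes "prime p" "coprime r p"
  shows "(\<Sum>e\<in>{e\<in>multiples_below R r. \<not> p dvd e}. lam H R l e * gstar H e)
           = ysum H R l r - gstar H p * zsum H R l r p"
proof -
  have split: "multiples_below R r = {e\<in>multiples_below R r. \<not> p dvd e} \<union> multiples_below R (r * p)"
    using assms by (auto simp: multiples_below_def divides_mult intro: dvd_mult_left)
  have "lam H R l n * gstar H n = gstar H p * (lam H R l n * gstar H (n div p))"
    if "n \<in> multiples_below R (r * p)" for n
  proof (cases "squarefree n")
    case True
    have "p dvd n" using that by (auto simp: multiples_below_def intro: dvd_mult_left)
    then show ?thesis by (simp add: gstar_div_prime[OF True assms(1)])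
  qed (simp add: lam_eq_0_if_not_squarefree)
  then have "(\<Sum>e\<in>multiples_below R (r * p). lam H R l e * gstar H e) = gstar H p * zsum H R l r p"
    unfolding zsum_def sum_distrib_left by (rule sum.cong[OF refl])
  moreover have "(\<Sum>e\<in>multiples_below R r. lam H R l e * gstar H e)
      = (\<Sum>e\<in>{e\<in>multiples_below R r. \<not> p dvd e}. lam H R l e * gstar H e)
        + (\<Sum>e\<in>multiples_below R (r * p). lam H R l e * gstar H e)"
  proof (subst split, rule sum.union_disjoint)
    show "finite {e\<in>multiples_below R r. \<not> p dvd e}" using finite_multiples_below by simp
    show "{e\<in>multiples_below R r. \<not> p dvd e} \<inter> multiples_below R (r * p) = {}"
      by (auto simp: multiples_below_def intro: dvd_mult_left)
  qed (rule finite_multiples_below)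
  ultimately show ?thesis by (simp add: ysum_def)
qed

definition r_range :: "int set \<Rightarrow> real \<Rightarrow> nat \<Rightarrow> nat set" where
  "r_range H R p = {r. 0 < r \<and> coprime r (Aprod H) \<and> coprime r p \<and> real r < R}"

lemma finite_r_range: "finite (r_range H R p)"
  by (rule finite_subset[OF _ finite_nat_less_real]) (auto simp: r_range_def)

context
  fixes H :: "int set"
  assumes finite_H: "finite H" and zero_in_H: "0 \<in> H" and two_le_card_H: "2 \<le> card H"
begin

lemma finite_primes_nustar_eq_0: "finite {q. prime q \<and> nustar H q = 0}"
proof -
  have "\<not> H \<subseteq> {0}"
    using two_le_card_H card_mono[of "{0}" H] by auto
  then obtain h where h: "h \<in> H" "h \<noteq> 0" by blast
  have "q \<le> nat \<bar>h\<bar>" if "prime q" "nustar H q = 0" for q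
    using dvd_imp_le_int[OF h(2) prime_dvd_if_nustar_eq_0[OF finite_H h(1) that]] by simp
  then have "{q. prime q \<and> nustar H q = 0} \<subseteq> {..nat \<bar>h\<bar>}" by auto
  then show ?thesis by (rule finite_subset) simp
qed

lemma prime_dvd_Aprod_iff:
  assumes "prime q"
  shows "q dvd Aprod H \<longleftrightarrow> nustar H q = 0"
proof -
  have "q dvd Aprod H \<longleftrightarrow> (\<exists>x\<in>{q. prime q \<and> nustar H q = 0}. q dvd x)"
    unfolding Aprod_def by (rule prime_dvd_prod_iff[OF finite_primes_nustar_eq_0 assms])
  then show ?thesis
    using assms by (auto dest: primes_dvd_imp_eq[OF assms])
qed

lemma gstar_eq_0_if_not_coprime:
  assumes "0 < n" "\<not> coprime n (Aprod H)"
  shows "gstar H n = 0"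
proof -
  obtain q where q: "prime q" "q dvd n" "q dvd Aprod H"
    using assms(2) prime_factor_nat[of "gcd n (Aprod H)"]
    by (metis coprime_iff_gcd_eq_1 dvd_trans gcd_dvd1 gcd_dvd2)
  then have "nustar H n = 0"
    using nustar_eq_0_if_dvd[OF q(2) assms(1)] prime_dvd_Aprod_iff by blast
  then show ?thesis by (simp add: gstar_def)
qed

lemma one_plus_f1star_mult_gstar:
  assumes "prime q" "\<not> q dvd Aprod H"
  shows "(1 + f1star H q) * gstar H q = 1"
proof -
  have nustar: "real (nustar H q) = real (nu H q) - 1" "real (nu H q) - 1 \<noteq> 0"
    using nustar_plus_1_prime[OF finite_H zero_in_H assms(1)] prime_dvd_Aprod_iff[OF assms(1)]
      assms(2)
    by auto
  have "real q - 1 \<noteq> 0" using prime_gt_1_nat[OF assms(1)] by simp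
  with nustar show ?thesis
    by (simp add: f1star_prime gstar_prime assms(1) divide_simps)
qed

lemma f1star_neq_0:
  assumes "admissible H" "coprime r (Aprod H)"
  shows "f1star H r \<noteq> 0"
proof -
  have "f1star H q \<noteq> 0" if "q \<in> prime_factors r" for q
  proof -
    have q: "prime q" "\<not> q dvd Aprod H"
      using in_prime_factors_imp_prime[OF that] prime_factor_not_dvd_if_coprime[OF that assms(2)]
      by blast+
    have "nu H q < q" using assms(1) q(1) by (simp add: admissible_def)
    moreover have "nu H q \<noteq> 1"
      using nustar_plus_1_prime[OF finite_H zero_in_H q(1)] prime_dvd_Aprod_iff[OF q(1)] q(2)
      by auto
    ultimately show ?thesis by (simp add: f1star_prime q(1))
  qed
  then show ?thesis by (subst f1star_eq_prod) simp
qed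

lemma sum_f1star_divisors_mult_gstar:
  assumes "squarefree g" "coprime g (Aprod H)"
  shows "(\<Sum>r | r dvd g. f1star H r) * gstar H g = 1"
proof -
  have "(\<Sum>r | r dvd g. f1star H r) = (\<Sum>r | r dvd g. \<Prod>q\<in>prime_factors r. f1star H q)"
    by (rule sum.cong[OF refl]) (rule f1star_eq_prod)
  also have "\<dots> = (\<Prod>q\<in>prime_factors g. 1 + f1star H q)"
    by (rule sum_divisors_squarefree[OF assms(1)])
  finally have "(\<Sum>r | r dvd g. f1star H r) * gstar H g
                  = (\<Prod>q\<in>prime_factors g. (1 + f1star H q) * gstar H q)"
    by (simp add: gstar_squarefree[OF assms(1)] prod.distrib)
  also have "\<dots> = 1"
    using assms(2) by (intro prod.neutral ballI one_plus_f1star_mult_gstar)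
      (metis in_prime_factors_imp_prime prime_factor_not_dvd_if_coprime)+
  finally show ?thesis .
qed

lemma gstar_lcm:
  assumes "squarefree a" "squarefree b"
  shows "gstar H (lcm a b)
           = gstar H a * gstar H b * (\<Sum>r | r dvd gcd a b \<and> coprime r (Aprod H). f1star H r)"
proof (cases "coprime (gcd a b) (Aprod H)")
  case True
  have ab: "a \<noteq> 0" "b \<noteq> 0" using assms by (metis not_squarefree_0)+
  have sq: "squarefree (gcd a b)" "squarefree (lcm a b)"
    using squarefree_mono[OF gcd_dvd1 assms(1)] squarefree_lcm[OF assms] .
  have "gstar H (lcm a b) * gstar H (gcd a b) = gstar H a * gstar H b"
    by (simp add: gstar_squarefree sq assms prime_factors_lcm prime_factors_gcd ab prod.union_inter)
  moreover have "{r. r dvd gcd a b \<and> coprime r (Aprod H)} = {r. r dvd gcd a b}"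
    using True coprime_divisors[OF _ dvd_refl] by blast
  ultimately show ?thesis
    using sum_f1star_divisors_mult_gstar[OF sq(1) True]
    by (metis (no_types, lifting) mult.assoc mult.commute mult_1_right)
next
  case False
  then have "\<not> coprime a (Aprod H)" "\<not> coprime (lcm a b) (Aprod H)"
    by (meson coprime_divisors dvd_lcm1 dvd_refl gcd_dvd1)+
  moreover have "0 < a" "0 < lcm a b"
    using assms by (metis lcm_pos_nat not_gr0 not_squarefree_0)+
  ultimately show ?thesis by (simp add: gstar_eq_0_if_not_coprime)
qed

lemma ystar_eq_ysum:
  assumes "0 < r" "coprime r (Aprod H)" "real r < R"
  shows "ystar H R l r = mu r * f1star H r * ysum H R l r"
proof -
  have "(\<Sum>d | 0 < d \<and> coprime d (Aprod H) \<and> real (d * r) < R. lam H R l (d * r) * gstar H (d * r))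
          = ysum H R l r"
    unfolding ysum_def using assms(1)
    by (rule sum_multiples_below_reindex) (use assms(1) in \<open>simp add: gstar_eq_0_if_not_coprime\<close>)
  with assms show ?thesis by (simp add: ystar_def divide_fstar_eq)
qed

lemma zstar_eq_zsum:
  assumes "prime p" "0 < r" "coprime r (Aprod H)"
  shows "zstar H R l r p = mu (p * r) * f1star H r * zsum H R l r p"
proof (cases "real r < R / real p")
  case True
  have "(\<Sum>d | 0 < d \<and> coprime d (Aprod H) \<and> real (d * r * p) < R.
           lam H R l (d * r * p) * gstar H (d * r))
          = (\<Sum>d | 0 < d \<and> coprime d (Aprod H) \<and> real (d * (r * p)) < R.
               lam H R l (d * (r * p)) * gstar H (d * (r * p) div p))"
    using prime_gt_0_nat[OF assms(1)] by (simp add: mult.assoc)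
  also have "\<dots> = zsum H R l r p"
    unfolding zsum_def using assms(2) prime_gt_0_nat[OF assms(1)]
    by (intro sum_multiples_below_reindex) (simp_all add: gstar_eq_0_if_not_coprime mult.assoc)
  finally show ?thesis
    using True assms(3) by (simp add: zstar_def divide_fstar_eq)
next
  case False
  then have Rrp: "R \<le> real (r * p)" using prime_gt_0_nat[OF assms(1)] by (simp add: field_simps)
  have "\<not> (0 < n \<and> real n < R \<and> r * p dvd n)" for n
  proof
    assume n: "0 < n \<and> real n < R \<and> r * p dvd n"
    then have "real (r * p) \<le> real n" by (intro of_nat_mono dvd_imp_le) auto
    with n Rrp show False by linarith
  qed
  then have "multiples_below R (r * p) = {}" by (simp add: multiples_below_def)
  with False show ?thesis by (simp add: zstar_def zsum_def)
qed

lemma f1star_zsum_eq: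
  assumes "prime p" "r \<in> r_range H R p"
  shows "f1star H r * zsum H R l r p = - mu r * zstar H R l r p"
proof (cases "squarefree r")
  case True
  then have "mu r * mu r = 1" using mu_squared[of r] by (simp add: power2_eq_square)
  with assms show ?thesis
    by (simp add: r_range_def zstar_eq_zsum mu_prime_mult algebra_simps)
next
  case False
  then show ?thesis by (simp add: zsum_eq_0_if_not_squarefree mu_def)
qed

lemma U1_summand_eq:
  assumes "admissible H" "prime p" "r \<in> r_range H R p"
  shows "f1star H r * zsum H R l1 r p * (ysum H R l2 r - gstar H p * zsum H R l2 r p)
           = - (zstar H R l1 r p * ystar H R l2 r / f1star H r)
             - gstar H p * (zstar H R l1 r p * zstar H R l2 r p / f1star H r)"
proof -
  have r: "0 < r" "coprime r (Aprod H)" "coprime r p" "real r < R"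
    using assms(3) by (simp_all add: r_range_def)
  have "f1star H r \<noteq> 0" by (rule f1star_neq_0[OF assms(1) r(2)])
  with f1star_zsum_eq[OF assms(2,3), where l = l1] show ?thesis
    by (simp add: ystar_eq_ysum[OF r(1,2,4)] zstar_eq_zsum[OF assms(2) r(1,2), where l = l2]
        mu_prime_mult[OF assms(2) r(3)] algebra_simps)
qed

lemma U3_summand_eq:
  assumes "admissible H" "prime p" "r \<in> r_range H R p"
  shows "f1star H r * zsum H R l1 r p * zsum H R l2 r p
           = zstar H R l1 r p * zstar H R l2 r p / f1star H r"
proof -
  have r: "0 < r" "coprime r (Aprod H)" "coprime r p"
    using assms(3) by (simp_all add: r_range_def)
  have "f1star H r \<noteq> 0" by (rule f1star_neq_0[OF assms(1) r(2)])
  with f1star_zsum_eq[OF assms(2,3), where l = l1] show ?thesis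
    by (simp add: zstar_eq_zsum[OF assms(2) r(1,2), where l = l2] mu_prime_mult[OF assms(2) r(3)])
qed

lemma lam_lam_gstar_lcm:
  assumes "prime p" "d \<in> multiples_below R p" "b dvd e" "0 < b"
  shows "lam H R l1 d * lam H R l2 e * gstar H (lcm (d div p) b)
           = (\<Sum>r\<in>{r\<in>r_range H R p. r dvd d div p \<and> r dvd b}.
                f1star H r * (lam H R l1 d * gstar H (d div p)) * (lam H R l2 e * gstar H b))"
proof (cases "squarefree d \<and> squarefree e")
  case True
  define a where "a = d div p"
  have d: "0 < d" "real d < R" "p dvd d" using assms(2) by (simp_all add: multiples_below_def)
  have "a dvd d" using d(3) unfolding a_def by (metis dvd_div_mult_self dvd_triv_left)
  then have a: "squarefree a" "coprime a p" "0 < a"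
    using True coprime_div_prime_if_squarefree[OF _ assms(1) d(3)]
      squarefree_mono squarefree_imp_pos
    by (auto simp: a_def)
  have "real a \<le> real d" by (simp add: a_def div_le_dividend)
  have "{r\<in>r_range H R p. r dvd a \<and> r dvd b} = {r. r dvd gcd a b \<and> coprime r (Aprod H)}"
  proof safe
    fix r assume r: "r dvd gcd a b" "coprime r (Aprod H)"
    then have "r dvd a" by simp
    then have "0 < r" "r \<le> a" "coprime r p"
      using a(2,3) coprime_divisors[OF _ dvd_refl] by (auto intro: dvd_imp_le dvd_pos_nat)
    with r d(2) \<open>real a \<le> real d\<close> show "r \<in> r_range H R p"
      by (auto simp: r_range_def)
  qed (auto simp: r_range_def)
  moreover have "squarefree b" using True squarefree_mono[OF assms(3)] by blast
  ultimately have "gstar H (lcm a b)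
      = gstar H a * gstar H b * (\<Sum>r\<in>{r\<in>r_range H R p. r dvd a \<and> r dvd b}. f1star H r)"
    using gstar_lcm[OF a(1)] by simp
  then show ?thesis
    unfolding a_def[symmetric] by (simp add: sum_distrib_left sum_distrib_right ac_simps)
qed (auto simp: lam_eq_0_if_not_squarefree)

lemma U1_eq:
  assumes "admissible H" "prime p"
  shows "U1 H R l1 l2 p =
      - (\<Sum>r\<in>r_range H R p. zstar H R l1 r p * ystar H R l2 r / f1star H r)
      - real (nustar H p) / (real p - 1) *
        (\<Sum>r\<in>r_range H R p. zstar H R l1 r p * zstar H R l2 r p / f1star H r)"
proof -
  let ?X = "multiples_below R p" and ?Y = "{e. 0 < e \<and> real e < R \<and> \<not> p dvd e}"
  have p: "0 < p" using assms(2) prime_gt_0_nat by blast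
  have "U1 H R l1 l2 p = (\<Sum>(d, e)\<in>?X \<times> ?Y. lam H R l1 d * lam H R l2 e * gstar H (lcm (d div p) e))"
    unfolding U1_def
    by (intro sum.cong) (auto simp: multiples_below_def gstar_def lcm_div_prime_left[OF assms(2)])
  also have "\<dots> = (\<Sum>(d, e)\<in>?X \<times> ?Y. \<Sum>r\<in>{r\<in>r_range H R p. r dvd d div p \<and> r dvd e}.
      f1star H r * (lam H R l1 d * gstar H (d div p)) * (lam H R l2 e * gstar H e))"
    by (intro sum.cong refl) (auto intro: lam_lam_gstar_lcm[OF assms(2)])
  also have "\<dots> = (\<Sum>r\<in>r_range H R p. f1star H r
      * (\<Sum>d\<in>{d\<in>?X. r dvd d div p}. lam H R l1 d * gstar H (d div p))
      * (\<Sum>e\<in>{e\<in>?Y. r dvd e}. lam H R l2 e * gstar H e))"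
    by (rule sum_product_restrict_swap)
      (auto simp: finite_multiples_below finite_r_range
        intro: finite_subset[OF _ finite_nat_less_real])
  also have "\<dots> = (\<Sum>r\<in>r_range H R p.
      f1star H r * zsum H R l1 r p * (ysum H R l2 r - gstar H p * zsum H R l2 r p))"
  proof (rule sum.cong[OF refl])
    fix r assume "r \<in> r_range H R p"
    then have "coprime r p" by (simp add: r_range_def)
    moreover have "{e\<in>?Y. r dvd e} = {e\<in>multiples_below R r. \<not> p dvd e}"
      by (auto simp: multiples_below_def)
    ultimately show "f1star H r * (\<Sum>d\<in>{d\<in>?X. r dvd d div p}. lam H R l1 d * gstar H (d div p))
        * (\<Sum>e\<in>{e\<in>?Y. r dvd e}. lam H R l2 e * gstar H e)
        = f1star H r * zsum H R l1 r p * (ysum H R l2 r - gstar H p * zsum H R l2 r p)"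
      by (simp add: multiples_below_div_dvd[OF p] zsum_def sum_multiples_below_not_dvd[OF assms(2)])
  qed
  also have "\<dots> = (\<Sum>r\<in>r_range H R p. - (zstar H R l1 r p * ystar H R l2 r / f1star H r)
      - gstar H p * (zstar H R l1 r p * zstar H R l2 r p / f1star H r))"
    by (intro sum.cong refl) (rule U1_summand_eq[OF assms])
  finally show ?thesis
    by (simp add: sum_subtractf sum_negf sum_distrib_left gstar_prime[OF assms(2)])
qed

lemma U3_eq:
  assumes "admissible H" "prime p"
  shows "U3 H R l1 l2 p =
      (\<Sum>r\<in>r_range H R p. zstar H R l1 r p * zstar H R l2 r p / f1star H r)"
proof -
  let ?X = "multiples_below R p"
  have p: "0 < p" using assms(2) prime_gt_0_nat by blast
  have "U3 H R l1 l2 p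
      = (\<Sum>(d, e)\<in>?X \<times> ?X. lam H R l1 d * lam H R l2 e * gstar H (lcm (d div p) (e div p)))"
    unfolding U3_def
    by (intro sum.cong) (auto simp: multiples_below_def gstar_def lcm_div_prime_both[OF assms(2)])
  also have "\<dots> = (\<Sum>(d, e)\<in>?X \<times> ?X. \<Sum>r\<in>{r\<in>r_range H R p. r dvd d div p \<and> r dvd e div p}.
      f1star H r * (lam H R l1 d * gstar H (d div p)) * (lam H R l2 e * gstar H (e div p)))"
    using p
    by (intro sum.cong refl) (auto intro!: lam_lam_gstar_lcm[OF assms(2)] simp: multiples_below_def)
  also have "\<dots> = (\<Sum>r\<in>r_range H R p. f1star H r
      * (\<Sum>d\<in>{d\<in>?X. r dvd d div p}. lam H R l1 d * gstar H (d div p))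
      * (\<Sum>e\<in>{e\<in>?X. r dvd e div p}. lam H R l2 e * gstar H (e div p)))"
    by (rule sum_product_restrict_swap) (simp_all add: finite_multiples_below finite_r_range)
  also have "\<dots> = (\<Sum>r\<in>r_range H R p. f1star H r * zsum H R l1 r p * zsum H R l2 r p)"
    by (simp add: multiples_below_div_dvd[OF p] zsum_def)
  also have "\<dots> = (\<Sum>r\<in>r_range H R p. zstar H R l1 r p * zstar H R l2 r p / f1star H r)"
    by (intro sum.cong refl) (rule U3_summand_eq[OF assms])
  finally show ?thesis .
qed

end

theorem lemma13:
  fixes H :: "int set" and R :: real and l1 l2 p :: nat
  assumes "finite H" and "card H \<ge> 2" and "0 \<in> H" and "admissible H"
    and "l1 \<le> card H" and "l2 \<le> card H"
    and "R > 1" and "prime p" and "real p < R"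
  shows "(U1 H R l1 l2 p =
      - (\<Sum>r\<in>{r. 0 < r \<and> coprime r (Aprod H) \<and> coprime r p \<and> real r < R}.
           zstar H R l1 r p * ystar H R l2 r / f1star H r)
      - real (nustar H p) / (real p - 1) *
        (\<Sum>r\<in>{r. 0 < r \<and> coprime r (Aprod H) \<and> coprime r p \<and> real r < R}.
           zstar H R l1 r p * zstar H R l2 r p / f1star H r)) \<and>
        (U3 H R l1 l2 p =
        (\<Sum>r\<in>{r. 0 < r \<and> coprime r (Aprod H) \<and> coprime r p \<and> real r < R}.
           zstar H R l1 r p * zstar H R l2 r p / f1star H r))"
  using U1_eq[OF assms(1,3,2,4,8)] U3_eq[OF assms(1,3,2,4,8)] unfolding r_range_def by simp

end
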